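(* For the Hawaiian earring $\mathcal X$, $|\mathfrak P^\omega(\mathcal X)|=\omega$.
   Context: $\mathcal X=\bigcup_{n\in\mathbb N}C_n$ with $C_n=\{(x,y)\in\mathbb R^2: x^2+(y-\tfrac1n)^2=\tfrac1{n^2}\}$, base point $0$. $\omega=|\mathbb N|$. An $\omega$-loop at $0$ is a continuous $k:[0,1]\to\mathcal X$ with $k(0)=k(1)=0$ all of whose fibres are finite; $\mathfrak P^\omega(\mathcal X)$ is the subgroup of $\pi_1(\mathcal X,0)$ generated by homotopy classes (rel endpoints) of $\omega$-loops at $0$. *)

theory Defs
  imports "HOL-Analysis.Analysis"
begin

definition hawaiian_earring :: "(real \<times> real) set" where
  "hawaiian_earring = (\<Union>n\<in>{1::nat..}. {(x, y). x^2 + (y - 1 / real n)^2 = 1 / (real n)^2})"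

definition omega_loop :: "(real \<Rightarrow> real \<times> real) \<Rightarrow> bool" where
  "omega_loop k \<longleftrightarrow> path k \<and> path_image k \<subseteq> hawaiian_earring \<and>
     pathstart k = 0 \<and> pathfinish k = 0 \<and>
     (\<forall>p. finite {t\<in>{0..1}. k t = p})"

text \<open>Loops at 0 representing elements of the subgroup of pi_1 generated by classes of omega-loops:
  the identity, the generators, inverses and products.\<close>
inductive_set omega_generated :: "(real \<Rightarrow> real \<times> real) set" where
  const: "(\<lambda>t. 0) \<in> omega_generated"
| gen: "omega_loop k \<Longrightarrow> k \<in> omega_generated"
| rev: "g \<in> omega_generated \<Longrightarrow> reversepath g \<in> omega_generated"
| join: "g \<in> omega_generated \<Longrightarrow> h \<in> omega_generated \<Longrightarrow> g +++ h \<in> omega_generated"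

definition P_omega :: "(real \<Rightarrow> real \<times> real) set set" where
  "P_omega = (\<lambda>g. {h. homotopic_paths hawaiian_earring g h}) ` omega_generated"

end

theory Submission
  imports Defs "HOL-Complex_Analysis.Complex_Analysis" "HOL-Library.Countable"
begin

text \<open>An \<open>\<omega>\<close>-loop passes through the base point only finitely often, and between two consecutive
  visits it stays inside a single circle \<open>C\<^sub>n\<close>, where it is homotopic to a standard loop winding
  \<open>j\<close> times. So every element of \<open>P_omega\<close> is represented by a finite word in these standard
  loops, and there are countably many words.
  Conversely, the simple loops around the \<open>C\<^sub>n\<close> are \<open>\<omega>\<close>-loops and pairwise non-homotopic: the point
  \<open>(0, 1/n + 1/(n+1))\<close> lies off the earring, inside \<open>C\<^sub>n\<close> and outside every smaller circle, so winding
  numbers around it separate them.\<close>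

definition circle_loop :: "complex \<Rightarrow> real \<Rightarrow> real \<Rightarrow> int \<Rightarrow> real \<Rightarrow> complex" where
  "circle_loop c r \<theta> j t = c + of_real r * exp (\<i> * of_real (\<theta> + 2 * pi * of_int j * t))"

lemma path_circle_loop: "path (circle_loop c r \<theta> j)"
  unfolding circle_loop_def[abs_def] path_def by (intro continuous_intros)

lemma circle_loop_in_sphere: "r \<ge> 0 \<Longrightarrow> circle_loop c r \<theta> j t \<in> sphere c r"
  by (simp add: circle_loop_def dist_norm norm_mult)

lemma circle_loop_0: "circle_loop c r \<theta> j 0 = c + of_real r * exp (\<i> * of_real \<theta>)"
  by (simp add: circle_loop_def)

lemma circle_loop_1: "circle_loop c r \<theta> j 1 = c + of_real r * exp (\<i> * of_real \<theta>)"
proof -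
  have "\<i> * of_real (\<theta> + 2 * pi * of_int j * 1) = \<i> * of_real \<theta> + \<i> * (of_int j * (of_real pi * 2))"
    by (simp add: algebra_simps)
  then show ?thesis by (simp only: circle_loop_def exp_plus_2pin)
qed

lemma circle_loop_shiftpath_circlepath:
  "circle_loop c r (- pi / 2) 1 = shiftpath (3/4) (circlepath c r)"
proof
  fix t
  have "circlepath c r (3/4 + t) = circlepath c r (t - 1/4)"
    using circlepath_add1[of c r "t - 1/4"] by (simp add: algebra_simps)
  moreover have "circle_loop c r (- pi / 2) 1 t = circlepath c r (t - 1/4)"
    by (simp add: circle_loop_def circlepath algebra_simps)
  ultimately show "circle_loop c r (- pi / 2) 1 t = shiftpath (3/4) (circlepath c r) t"
    by (simp add: shiftpath_def algebra_simps)
qed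

lemma finite_fibres_circle_loop:
  assumes "r \<noteq> 0"
  shows "finite {t \<in> {0..1}. circle_loop c r \<theta> 1 t = z}"
proof (cases "\<exists>s\<in>{0..1}. circle_loop c r \<theta> 1 s = z")
  case True
  then obtain s where s: "s \<in> {0..1}" "circle_loop c r \<theta> 1 s = z" by blast
  have "{t \<in> {0..1}. circle_loop c r \<theta> 1 t = z} \<subseteq> {s - 1, s, s + 1}"
  proof
    fix t assume "t \<in> {t \<in> {0..1}. circle_loop c r \<theta> 1 t = z}"
    then have t: "t \<in> {0..1}" "circle_loop c r \<theta> 1 t = z" by auto
    then have "circle_loop c r \<theta> 1 t = circle_loop c r \<theta> 1 s"
      using s by simp
    then have "exp (\<i> * of_real (\<theta> + 2 * pi * t)) = exp (\<i> * of_real (\<theta> + 2 * pi * s))"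
      using assms by (simp add: circle_loop_def)
    then obtain m :: int where
      "\<i> * of_real (\<theta> + 2 * pi * t) = \<i> * of_real (\<theta> + 2 * pi * s) + (of_int (2 * m) * pi) * \<i>"
      by (auto simp: exp_eq)
    then have "Im (\<i> * of_real (\<theta> + 2 * pi * t)) = Im (\<i> * of_real (\<theta> + 2 * pi * s) + (of_int (2 * m) * pi) * \<i>)"
      by simp
    then have "2 * pi * t = 2 * pi * (s + m)" by (simp add: algebra_simps)
    then have tm: "t = s + m" by simp
    with t s have "m \<in> {-1, 0, 1}" by auto
    with tm show "t \<in> {s - 1, s, s + 1}" by auto
  qed
  then show ?thesis by (rule finite_subset) simp
next
  case False
  then have "{t \<in> {0..1}. circle_loop c r \<theta> 1 t = z} = {}" by blast
  then show ?thesis by (metis finite.emptyI)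
qed

lemma sphere_path_exp_lift:
  fixes \<gamma> :: "real \<Rightarrow> complex"
  assumes "path \<gamma>" "path_image \<gamma> \<subseteq> sphere c r" "r > 0"
  obtains g where "continuous_on {0..1} g"
    "\<And>t. t \<in> {0..1} \<Longrightarrow> \<gamma> t = c + exp (g t)" "\<And>t. t \<in> {0..1} \<Longrightarrow> Re (g t) = ln r"
proof -
  have norm: "norm (\<gamma> t - c) = r" if "t \<in> {0..1}" for t
  proof -
    have "\<gamma> t \<in> sphere c r" using assms(2) that unfolding path_image_def by blast
    then show ?thesis by (simp add: dist_norm norm_minus_commute)
  qed
  have "continuous_on {0..1} (\<lambda>t. \<gamma> t - c)"
    using assms(1) by (auto simp: path_def intro!: continuous_intros)
  moreover have "contractible {0..1::real}"
    by (simp add: convex_imp_contractible)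
  moreover have "\<gamma> t - c \<noteq> 0" if "t \<in> {0..1}" for t
    using norm[OF that] \<open>r > 0\<close> by auto
  ultimately obtain g where g: "continuous_on {0..1} g" "\<And>t. t \<in> {0..1} \<Longrightarrow> \<gamma> t - c = exp (g t)"
    using continuous_logarithm_on_contractible by blast
  moreover have "Re (g t) = ln r" if "t \<in> {0..1}" for t
    using norm[OF that] g(2)[OF that] by (metis ln_exp norm_exp_eq_Re)
  ultimately show ?thesis using that by (metis add.commute diff_add_cancel)
qed

text \<open>The logarithm of \<open>\<gamma> - c\<close> is straight-line homotopic, inside the convex line \<open>Re z = ln r\<close>, to the
  linear path with the same endpoints; \<open>c + exp\<close> carries this homotopy back to the circle.\<close>
lemma homotopic_paths_sphere_circle_loop:
  fixes \<gamma> :: "real \<Rightarrow> complex"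
  assumes \<gamma>: "path \<gamma>" "path_image \<gamma> \<subseteq> sphere c r" and "r > 0"
    and ends: "pathstart \<gamma> = c + of_real r * exp (\<i> * of_real \<theta>)"
      "pathfinish \<gamma> = c + of_real r * exp (\<i> * of_real \<theta>)"
  shows "\<exists>j. homotopic_paths (sphere c r) \<gamma> (circle_loop c r \<theta> j)"
proof -
  obtain g where g: "continuous_on {0..1} g" "\<And>t. t \<in> {0..1} \<Longrightarrow> \<gamma> t = c + exp (g t)"
    and Re_g: "\<And>t. t \<in> {0..1} \<Longrightarrow> Re (g t) = ln r"
    using sphere_path_exp_lift[OF \<gamma> \<open>r > 0\<close>] by blast
  have "exp (g t) = exp (of_real (ln r) + \<i> * of_real \<theta>)" if "t = 0 \<or> t = 1" for t
    using g(2)[of t] ends that \<open>r > 0\<close> by (auto simp: pathstart_def pathfinish_def exp_add exp_of_real)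
  then obtain n0 n1 :: int where
    n0: "g 0 = of_real (ln r) + \<i> * of_real \<theta> + (of_int (2 * n0) * pi) * \<i>" and
    n1: "g 1 = of_real (ln r) + \<i> * of_real \<theta> + (of_int (2 * n1) * pi) * \<i>"
    by (metis exp_eq)
  define j where "j = n1 - n0"
  define lin where "lin t = g 0 + 2 * pi * \<i> * of_int j * of_real t" for t
  define V where "V = {z. Re z = ln r}"
  have "convex V"
    unfolding convex_def V_def by (auto simp: algebra_simps) (metis distrib_right mult_1)
  have "homotopic_paths V g lin"
  proof (rule homotopic_paths_linear)
    show "path g" using g(1) by (simp add: path_def)
    show "path lin" unfolding lin_def[abs_def] path_def by (intro continuous_intros)
    show "pathstart lin = pathstart g" "pathfinish lin = pathfinish g"
      by (simp_all add: lin_def pathstart_def pathfinish_def n0 n1 j_def algebra_simps)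
    show "closed_segment (g t) (lin t) \<subseteq> V" if "t \<in> {0..1}" for t
      using Re_g[OF that] Re_g[of 0] \<open>convex V\<close>
      by (intro closed_segment_subset) (auto simp: V_def lin_def)
  qed
  then have "homotopic_paths (sphere c r) ((\<lambda>z. c + exp z) \<circ> g) ((\<lambda>z. c + exp z) \<circ> lin)"
    by (rule homotopic_paths_continuous_image)
      (use \<open>r > 0\<close> in \<open>auto simp: V_def dist_norm norm_exp_eq_Re intro!: continuous_intros\<close>)
  moreover have "homotopic_paths (sphere c r) \<gamma> ((\<lambda>z. c + exp z) \<circ> g)"
    using \<gamma> by (intro homotopic_paths_eq) (auto simp: g(2))
  moreover have "(\<lambda>z. c + exp z) \<circ> lin = circle_loop c r \<theta> j"
  proof
    fix t
    have "exp (g 0) = of_real r * exp (\<i> * of_real \<theta>)"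
      using g(2)[of 0] ends(1) by (simp add: pathstart_def)
    then show "((\<lambda>z. c + exp z) \<circ> lin) t = circle_loop c r \<theta> j t"
      by (simp add: lin_def circle_loop_def algebra_simps) (simp add: exp_add)
  qed
  ultimately show ?thesis by (metis homotopic_paths_trans)
qed

definition complex_of_pair :: "real \<times> real \<Rightarrow> complex" where
  "complex_of_pair p = Complex (fst p) (snd p)"

definition pair_of_complex :: "complex \<Rightarrow> real \<times> real" where
  "pair_of_complex z = (Re z, Im z)"

lemma pair_of_complex_of_pair [simp]: "pair_of_complex (complex_of_pair p) = p"
  by (simp add: pair_of_complex_def complex_of_pair_def)

lemma complex_of_pair_of_complex [simp]: "complex_of_pair (pair_of_complex z) = z"
  by (simp add: pair_of_complex_def complex_of_pair_def)

lemma continuous_on_complex_of_pair: "continuous_on S complex_of_pair"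
  unfolding complex_of_pair_def[abs_def] Complex_eq by (intro continuous_intros)

lemma continuous_on_pair_of_complex: "continuous_on S pair_of_complex"
  unfolding pair_of_complex_def[abs_def] by (intro continuous_intros)

definition earring_circle :: "nat \<Rightarrow> (real \<times> real) set" where
  "earring_circle n = {(x, y). x^2 + (y - 1 / real n)^2 = 1 / (real n)^2}"

lemma mem_hawaiian_earring: "p \<in> hawaiian_earring \<longleftrightarrow> (\<exists>n\<ge>1. p \<in> earring_circle n)"
  by (auto simp: hawaiian_earring_def earring_circle_def)

lemma zero_mem_earring_circle [simp]: "0 \<in> earring_circle n"
  by (simp add: earring_circle_def zero_prod_def power_divide)

lemma earring_circle_subset: "n \<ge> 1 \<Longrightarrow> earring_circle n \<subseteq> hawaiian_earring"
  using mem_hawaiian_earring by blast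

definition earring_centre :: "nat \<Rightarrow> complex" where
  "earring_centre n = \<i> * of_real (1 / real n)"

lemma dist_earring_centre: "dist (earring_centre n) z = sqrt ((Re z)^2 + (Im z - 1 / real n)^2)"
  by (simp add: dist_norm earring_centre_def cmod_def power2_eq_square algebra_simps)

lemma pair_of_complex_mem_earring_circle:
  assumes "n \<ge> 1"
  shows "pair_of_complex z \<in> earring_circle n \<longleftrightarrow> z \<in> sphere (earring_centre n) (1 / real n)"
proof -
  have "z \<in> sphere (earring_centre n) (1 / real n) \<longleftrightarrow>
        sqrt ((Re z)^2 + (Im z - 1 / real n)^2) = sqrt ((1 / real n)^2)"
    using assms by (simp add: dist_earring_centre)
  then show ?thesis by (simp add: pair_of_complex_def earring_circle_def power_divide)
qed

lemma complex_of_pair_mem_sphere: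
  "n \<ge> 1 \<Longrightarrow> complex_of_pair p \<in> sphere (earring_centre n) (1 / real n) \<longleftrightarrow> p \<in> earring_circle n"
  using pair_of_complex_mem_earring_circle[of n "complex_of_pair p"] by simp

text \<open>The base point \<open>0\<close> sits at angle \<open>-pi/2\<close> on each circle.\<close>
definition earring_loop :: "nat \<Rightarrow> int \<Rightarrow> real \<Rightarrow> real \<times> real" where
  "earring_loop n j = pair_of_complex \<circ> circle_loop (earring_centre n) (1 / real n) (- pi / 2) j"

lemma earring_base_point:
  "earring_centre n + of_real (1 / real n) * exp (\<i> * of_real (- pi / 2)) = 0"
proof -
  have "cis (- pi / 2) = - \<i>" by (simp add: complex_eq_iff)
  then have "exp (\<i> * of_real (- pi / 2)) = - \<i>" by (metis cis_conv_exp)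
  then show ?thesis by (simp add: earring_centre_def)
qed

lemma pair_of_complex_0 [simp]: "pair_of_complex 0 = 0"
  by (simp add: pair_of_complex_def zero_prod_def)

lemma pathstart_earring_loop: "pathstart (earring_loop n j) = 0"
  by (simp only: pathstart_def earring_loop_def o_def circle_loop_0 earring_base_point pair_of_complex_0)

lemma pathfinish_earring_loop: "pathfinish (earring_loop n j) = 0"
  by (simp only: pathfinish_def earring_loop_def o_def circle_loop_1 earring_base_point pair_of_complex_0)

lemma homotopic_paths_earring_circle_earring_loop:
  assumes "n \<ge> 1" and p: "path p" "path_image p \<subseteq> earring_circle n" "pathstart p = 0" "pathfinish p = 0"
  shows "\<exists>j. homotopic_paths (earring_circle n) p (earring_loop n j)"
proof -
  have "path (complex_of_pair \<circ> p)"
    using p(1) by (intro path_continuous_image continuous_on_complex_of_pair)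
  moreover have "path_image (complex_of_pair \<circ> p) \<subseteq> sphere (earring_centre n) (1 / real n)"
    using p(2) complex_of_pair_mem_sphere[OF \<open>n \<ge> 1\<close>] by (auto simp: path_image_compose)
  moreover have "complex_of_pair 0 = 0" by (simp add: complex_of_pair_def Complex_eq)
  then have "pathstart (complex_of_pair \<circ> p) = earring_centre n + of_real (1 / real n) * exp (\<i> * of_real (- pi / 2))"
    "pathfinish (complex_of_pair \<circ> p) = earring_centre n + of_real (1 / real n) * exp (\<i> * of_real (- pi / 2))"
    using p(3,4) by (simp_all only: earring_base_point pathstart_compose pathfinish_compose)
  ultimately obtain j where
    "homotopic_paths (sphere (earring_centre n) (1 / real n)) (complex_of_pair \<circ> p)
       (circle_loop (earring_centre n) (1 / real n) (- pi / 2) j)"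
    using homotopic_paths_sphere_circle_loop \<open>n \<ge> 1\<close> by force
  then have "homotopic_paths (earring_circle n) (pair_of_complex \<circ> (complex_of_pair \<circ> p)) (earring_loop n j)"
    unfolding earring_loop_def
    by (rule homotopic_paths_continuous_image[OF _ continuous_on_pair_of_complex])
      (use pair_of_complex_mem_earring_circle[OF \<open>n \<ge> 1\<close>] in blast)
  then show ?thesis by (auto simp: o_def)
qed

text \<open>On \<open>C\<^sub>n\<close> the equation \<open>x\<^sup>2 + (y - 1/n)\<^sup>2 = 1/n\<^sup>2\<close> reads \<open>x\<^sup>2 + y\<^sup>2 = 2y/n\<close>, so away from \<open>0\<close> this
  continuous function recovers \<open>n\<close>.\<close>
definition circle_index :: "real \<times> real \<Rightarrow> real" where
  "circle_index p = 2 * snd p / ((fst p)^2 + (snd p)^2)"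

lemma circle_index_earring_circle:
  assumes "n \<ge> 1" "p \<in> earring_circle n" "p \<noteq> 0"
  shows "circle_index p = real n"
proof -
  obtain x y where p: "p = (x, y)" by fastforce
  have "x^2 + (y - 1 / real n)^2 = 1 / (real n)^2" using assms(2) p by (simp add: earring_circle_def)
  moreover have "(y - 1 / real n)^2 = y^2 - 2 * y / real n + 1 / (real n)^2"
    by (simp add: power2_diff power_divide field_simps)
  ultimately have sq: "x^2 + y^2 = 2 * y / real n" by linarith
  have "y \<noteq> 0"
    using sq assms(3) p by (auto simp: zero_prod_def)
  then show ?thesis using sq p assms(1) by (simp add: circle_index_def)
qed

lemma circle_index_constant_on:
  assumes "continuous_on S k" "connected S" "k ` S \<subseteq> hawaiian_earring - {0}"
  shows "(circle_index \<circ> k) constant_on S"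
proof (rule continuous_discrete_range_constant[OF \<open>connected S\<close>])
  have "(fst (k t))^2 + (snd (k t))^2 \<noteq> 0" if "t \<in> S" for t
    using assms(3) that by (auto simp: prod_eq_iff)
  then show "continuous_on S (circle_index \<circ> k)"
    unfolding circle_index_def[abs_def] o_def
    by (intro continuous_intros continuous_on_compose2[OF assms(1)] order_refl) auto
  have index: "\<exists>n::nat. circle_index (k t) = n" if "t \<in> S" for t
    using assms(3) that circle_index_earring_circle mem_hawaiian_earring by blast
  show "\<exists>e>0. \<forall>y. y \<in> S \<and> (circle_index \<circ> k) y \<noteq> (circle_index \<circ> k) x \<longrightarrow>
          e \<le> norm ((circle_index \<circ> k) y - (circle_index \<circ> k) x)" if "x \<in> S" for x
  proof (intro exI[of _ 1] conjI allI impI)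
    fix y assume "y \<in> S \<and> (circle_index \<circ> k) y \<noteq> (circle_index \<circ> k) x"
    with index[of x] index[of y] \<open>x \<in> S\<close> obtain m m' :: nat
      where "circle_index (k x) = m" "circle_index (k y) = m'" "m \<noteq> m'" by auto
    then show "1 \<le> norm ((circle_index \<circ> k) y - (circle_index \<circ> k) x)" by auto
  qed simp
qed

lemma zero_free_subpath_in_earring_circle:
  assumes k: "path k" "path_image k \<subseteq> hawaiian_earring"
    and ab: "0 \<le> a" "a < b" "b \<le> 1" "k a = 0" "k b = 0"
    and nz: "\<And>t. a < t \<Longrightarrow> t < b \<Longrightarrow> k t \<noteq> 0"
  shows "\<exists>n\<ge>1. k ` {a..b} \<subseteq> earring_circle n"
proof -
  have kX: "k ` {a<..<b} \<subseteq> hawaiian_earring - {0}"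
    using k(2) ab nz by (force simp: path_image_def)
  have "continuous_on {a<..<b} k"
    using k(1) ab by (auto simp: path_def intro: continuous_on_subset)
  then obtain v where v: "\<And>t. t \<in> {a<..<b} \<Longrightarrow> circle_index (k t) = v"
    using circle_index_constant_on[OF _ _ kX] by (auto simp: constant_on_def)
  have mid: "(a + b) / 2 \<in> {a<..<b}" using ab by simp
  then obtain n where n: "n \<ge> 1" "k ((a + b) / 2) \<in> earring_circle n"
    using kX mem_hawaiian_earring by blast
  have "k t \<in> earring_circle n" if "t \<in> {a..b}" for t
  proof (cases "t = a \<or> t = b")
    case False
    then have t: "t \<in> {a<..<b}" using that by auto
    then obtain m where "m \<ge> 1" "k t \<in> earring_circle m"
      using kX mem_hawaiian_earring by blast
    moreover have "circle_index (k t) = circle_index (k ((a + b) / 2))"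
      using v[OF t] v[OF mid] by simp
    ultimately show ?thesis
      using circle_index_earring_circle n kX t mid by (metis DiffE image_subset_iff of_nat_eq_iff singletonI)
  qed (use ab in auto)
  then show ?thesis using n(1) by blast
qed

datatype earring_word =
  Trivial | Wind nat int | Inverse earring_word | Concat earring_word earring_word

instance earring_word :: countable by countable_datatype

fun earring_path :: "earring_word \<Rightarrow> real \<Rightarrow> real \<times> real" where
  "earring_path Trivial = (\<lambda>t. 0)"
| "earring_path (Wind n j) = earring_loop n j"
| "earring_path (Inverse u) = reversepath (earring_path u)"
| "earring_path (Concat u v) = earring_path u +++ earring_path v"

lemma pathstart_earring_path: "pathstart (earring_path u) = 0"
  and pathfinish_earring_path: "pathfinish (earring_path u) = 0"
  by (induction u) (auto simp: pathstart_earring_loop pathfinish_earring_loop, simp_all add: pathstart_def pathfinish_def)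

lemma subpath_homotopic_earring_path:
  assumes k: "path k" "path_image k \<subseteq> hawaiian_earring" and fin: "finite {t \<in> {0..1}. k t = 0}"
    and ab: "0 \<le> a" "a < b" "b \<le> 1" "k a = 0" "k b = 0"
  shows "\<exists>u. homotopic_paths hawaiian_earring (subpath a b k) (earring_path u)"
  using ab
proof (induction "card {t. a < t \<and> t < b \<and> k t = 0}" arbitrary: a b rule: less_induct)
  case (less a b)
  show ?case
  proof (cases "\<exists>c. a < c \<and> c < b \<and> k c = 0")
    case True
    then obtain c where c: "a < c" "c < b" "k c = 0" by blast
    let ?Z = "\<lambda>a b. {t. a < t \<and> t < b \<and> k t = 0}"
    have "finite (?Z a b)"
      by (rule finite_subset[OF _ fin]) (use less.prems in auto)
    moreover have "?Z a c \<subset> ?Z a b" "?Z c b \<subset> ?Z a b" using c by auto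
    ultimately have "card (?Z a c) < card (?Z a b)" "card (?Z c b) < card (?Z a b)"
      by (simp_all add: psubset_card_mono)
    then obtain u v where
      "homotopic_paths hawaiian_earring (subpath a c k) (earring_path u)"
      "homotopic_paths hawaiian_earring (subpath c b k) (earring_path v)"
      using less.hyps[of a c] less.hyps[of c b] less.prems c by auto
    then have "homotopic_paths hawaiian_earring (subpath a c k +++ subpath c b k) (earring_path (Concat u v))"
      by (simp add: homotopic_paths_join)
    moreover have "homotopic_paths hawaiian_earring (subpath a c k +++ subpath c b k) (subpath a b k)"
      by (rule homotopic_join_subpaths1[OF k]) (use less.prems c in auto)
    ultimately show ?thesis
      by (metis homotopic_paths_sym homotopic_paths_trans)
  next
    case False
    then obtain n where n: "n \<ge> 1" "k ` {a..b} \<subseteq> earring_circle n"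
      using zero_free_subpath_in_earring_circle[OF k] less.prems by blast
    have "path (subpath a b k)" using k(1) less.prems by (intro path_subpath) auto
    moreover have "path_image (subpath a b k) \<subseteq> earring_circle n"
      using n less.prems by (simp add: path_image_subpath closed_segment_eq_real_ivl)
    moreover have "pathstart (subpath a b k) = 0" "pathfinish (subpath a b k) = 0"
      using less.prems by simp_all
    ultimately obtain j where "homotopic_paths (earring_circle n) (subpath a b k) (earring_loop n j)"
      using homotopic_paths_earring_circle_earring_loop[OF n(1)] by blast
    then have "homotopic_paths hawaiian_earring (subpath a b k) (earring_path (Wind n j))"
      using homotopic_paths_subset earring_circle_subset[OF n(1)] by auto
    then show ?thesis by blast
  qed
qed

lemma omega_loop_homotopic_earring_path:
  assumes "omega_loop k"
  shows "\<exists>u. homotopic_paths hawaiian_earring k (earring_path u)"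
proof -
  have k: "path k" "path_image k \<subseteq> hawaiian_earring" "k 0 = 0" "k 1 = 0"
    "finite {t \<in> {0..1}. k t = 0}"
    using assms unfolding omega_loop_def pathstart_def pathfinish_def by blast+
  show ?thesis
    using subpath_homotopic_earring_path[OF k(1,2,5), of 0 1] k(3,4) by simp
qed

lemma omega_generated_homotopic_earring_path:
  "g \<in> omega_generated \<Longrightarrow> \<exists>u. homotopic_paths hawaiian_earring g (earring_path u)"
proof (induction rule: omega_generated.induct)
  case const
  have "homotopic_paths hawaiian_earring (\<lambda>t. 0) (earring_path Trivial)"
    using earring_circle_subset[of 1]
    by (auto simp: homotopic_paths_refl path_def path_image_def)
  then show ?case by blast
next
  case (gen k)
  then show ?case by (rule omega_loop_homotopic_earring_path)
next
  case (rev g)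
  then show ?case
    by (metis earring_path.simps(3) homotopic_paths_reversepath_D)
next
  case (join g h)
  then obtain u v where "homotopic_paths hawaiian_earring g (earring_path u)"
    "homotopic_paths hawaiian_earring h (earring_path v)" by blast
  moreover from this have "pathfinish g = pathstart h"
    by (metis homotopic_paths_imp_pathfinish homotopic_paths_imp_pathstart
        pathfinish_earring_path pathstart_earring_path)
  ultimately have "homotopic_paths hawaiian_earring (g +++ h) (earring_path (Concat u v))"
    by (simp add: homotopic_paths_join)
  then show ?case by blast
qed

lemma countable_P_omega: "countable P_omega"
proof (rule countable_subset)
  show "P_omega \<subseteq> range (\<lambda>u. {h. homotopic_paths hawaiian_earring (earring_path u) h})"
  proof
    fix A assume "A \<in> P_omega"
    then obtain g where "g \<in> omega_generated" and A: "A = {h. homotopic_paths hawaiian_earring g h}"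
      by (auto simp: P_omega_def)
    then obtain u where "homotopic_paths hawaiian_earring g (earring_path u)"
      using omega_generated_homotopic_earring_path by blast
    then have "A = {h. homotopic_paths hawaiian_earring (earring_path u) h}"
      unfolding A by (auto intro: homotopic_paths_trans homotopic_paths_sym)
    then show "A \<in> range (\<lambda>u. {h. homotopic_paths hawaiian_earring (earring_path u) h})" by blast
  qed
qed simp

lemma earring_loop_omega_loop:
  assumes "n \<ge> 1"
  shows "omega_loop (earring_loop n 1)"
  unfolding omega_loop_def
proof (intro conjI allI)
  show "path (earring_loop n 1)"
    unfolding earring_loop_def
    by (intro path_continuous_image path_circle_loop continuous_on_pair_of_complex)
  show "path_image (earring_loop n 1) \<subseteq> hawaiian_earring"
    using circle_loop_in_sphere pair_of_complex_mem_earring_circle[OF assms] earring_circle_subset[OF assms]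
    by (auto simp: earring_loop_def path_image_def)
  show "pathstart (earring_loop n 1) = 0" "pathfinish (earring_loop n 1) = 0"
    by (simp_all only: pathstart_earring_loop pathfinish_earring_loop)
  fix p
  have "{t \<in> {0..1}. earring_loop n 1 t = p} =
        {t \<in> {0..1}. circle_loop (earring_centre n) (1 / real n) (- pi / 2) 1 t = complex_of_pair p}"
    by (auto simp: earring_loop_def)
  then show "finite {t \<in> {0..1}. earring_loop n 1 t = p}"
    using finite_fibres_circle_loop assms by simp
qed

lemma separating_point_not_in_hawaiian_earring:
  assumes "n \<ge> 1"
  shows "(0, 1 / real n + 1 / real (n + 1)) \<notin> hawaiian_earring"
proof
  define y where "y = 1 / real n + 1 / real (n + 1)"
  assume "(0, 1 / real n + 1 / real (n + 1)) \<in> hawaiian_earring"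
  then obtain k where k: "k \<ge> 1" "(0, y) \<in> earring_circle k"
    using mem_hawaiian_earring y_def by auto
  have "y > 0" using assms by (simp add: y_def add_pos_pos)
  moreover have "(y - 1 / real k)^2 = y^2 - 2 * y / real k + 1 / (real k)^2"
    by (simp add: power2_diff power_divide field_simps)
  moreover have "(y - 1 / real k)^2 = 1 / (real k)^2" using k(2) by (simp add: earring_circle_def)
  ultimately have "y * y = y * (2 / real k)" by (simp add: power2_eq_square)
  with \<open>y > 0\<close> have "y = 2 / real k" by (metis mult_cancel_left less_irrefl)
  moreover have "1 / real (n + 1) < 1 / real n" using assms by (simp add: frac_less2)
  ultimately show False
  proof (cases "k \<le> n")
    case True
    then have "2 / real n \<le> 2 / real k" using k(1) by (simp add: frac_le)
    with \<open>y = 2 / real k\<close> \<open>1 / real (n + 1) < 1 / real n\<close> show False by (simp add: y_def)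
  next
    case False
    then have "2 / real k \<le> 2 / real (n + 1)" by (intro frac_le) auto
    with \<open>y = 2 / real k\<close> \<open>1 / real (n + 1) < 1 / real n\<close> show False by (simp add: y_def)
  qed
qed

lemma earring_loops_not_homotopic:
  assumes "n \<ge> 1" "n < m"
  shows "\<not> homotopic_paths hawaiian_earring (earring_loop n 1) (earring_loop m 1)"
proof
  define y where "y = 1 / real n + 1 / real (n + 1)"
  define w where "w = \<i> * of_real y"
  define \<gamma> where "\<gamma> n = circle_loop (earring_centre n) (1 / real n) (- pi / 2) 1" for n
  have dist_w: "dist (earring_centre k) w = \<bar>y - 1 / real k\<bar>" for k
    by (simp add: dist_earring_centre w_def)
  have "1 / real (n + 1) < 1 / real n" using assms by (simp add: frac_less2)
  moreover have "1 / real m \<le> 1 / real (n + 1)" using assms by (intro frac_le) auto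
  ultimately have inside: "dist (earring_centre n) w < 1 / real n"
    and outside: "dist (earring_centre m) w > 1 / real m"
    unfolding dist_w y_def by auto
  have "complex_of_pair \<in> hawaiian_earring \<rightarrow> - {w}"
  proof
    fix p assume "p \<in> hawaiian_earring"
    moreover have "pair_of_complex w = (0, y)" by (simp add: pair_of_complex_def w_def)
    ultimately show "complex_of_pair p \<in> - {w}"
      using separating_point_not_in_hawaiian_earring[OF assms(1)]
      by (metis ComplI pair_of_complex_of_pair singletonD y_def)
  qed
  moreover assume "homotopic_paths hawaiian_earring (earring_loop n 1) (earring_loop m 1)"
  ultimately have "homotopic_paths (- {w}) (complex_of_pair \<circ> earring_loop n 1) (complex_of_pair \<circ> earring_loop m 1)"
    using homotopic_paths_continuous_image continuous_on_complex_of_pair by blast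
  then have "winding_number (\<gamma> n) w = winding_number (\<gamma> m) w"
    by (simp add: earring_loop_def o_def \<gamma>_def[abs_def] winding_number_homotopic_paths)
  moreover have "winding_number (\<gamma> m) w = 0"
    unfolding \<gamma>_def
  proof (rule winding_number_zero_outside[OF path_circle_loop convex_cball])
    show "w \<notin> cball (earring_centre m) (1 / real m)" using outside by simp
    show "path_image (circle_loop (earring_centre m) (1 / real m) (- pi / 2) 1)
        \<subseteq> cball (earring_centre m) (1 / real m)"
      using circle_loop_in_sphere[of "1 / real m"] by (auto simp: path_image_def)
  qed (simp add: pathstart_def pathfinish_def circle_loop_0 circle_loop_1)
  moreover have "winding_number (\<gamma> n) w = 1"
  proof -
    have close: "norm (w - earring_centre n) < 1 / real n"
      using inside by (simp add: dist_norm norm_minus_commute)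
    then have "w \<notin> path_image (circlepath (earring_centre n) (1 / real n))"
      by (simp add: dist_norm norm_minus_commute)
    then have "winding_number (\<gamma> n) w = winding_number (circlepath (earring_centre n) (1 / real n)) w"
      unfolding \<gamma>_def circle_loop_shiftpath_circlepath by (intro winding_number_shiftpath) auto
    also have "\<dots> = 1"
      using close by (rule winding_number_circlepath)
    finally show ?thesis .
  qed
  ultimately show False by simp
qed

lemma infinite_P_omega: "infinite P_omega"
proof -
  define loop_class where "loop_class n = {h. homotopic_paths hawaiian_earring (earring_loop n 1) h}" for n
  have "loop_class ` {1..} \<subseteq> P_omega"
    using earring_loop_omega_loop omega_generated.gen by (auto simp: P_omega_def loop_class_def)
  moreover have "inj_on loop_class {1..}"
  proof (rule inj_onI)
    fix n m :: nat assume "n \<in> {1..}" "m \<in> {1..}" "loop_class n = loop_class m"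
    moreover have "earring_loop m 1 \<in> loop_class m"
      using \<open>m \<in> {1..}\<close> earring_loop_omega_loop
      by (auto simp: loop_class_def omega_loop_def homotopic_paths_refl)
    ultimately show "n = m"
      using earring_loops_not_homotopic homotopic_paths_sym
      by (metis atLeast_iff loop_class_def linorder_neqE_nat mem_Collect_eq)
  qed
  ultimately show ?thesis
    using finite_imageD finite_subset infinite_Ici by blast
qed

theorem lemma12p1:
  shows "countable P_omega \<and> infinite P_omega"
  using countable_P_omega infinite_P_omega by blast

end
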